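(* In the setting described in the context (left-continuous distortion function $g$), suppose that the processes $M=(M_t)_{t=1}^n$ and $L=(L_t)_{t=1}^n$ have the same law. Then for all $t=1,\dots,n$ and $j=1,\dots,m+1$, $$\mathsf E[\mathbf 1_{t,j}]=\frac{\mathsf E\big[G\,\mathbf 1_{\{G\in[\alpha_{j-1},\alpha_j)\}}\big]}{g(\alpha_j)-g(\alpha_{j-1})},$$ and the random vectors $(\mathbf 1_{t,j})_{j=1,\dots,m+1}$, $t=1,\dots,n$, are independent.
   Context: Let $n\ge1$ and let $L=(L_t)_{t=1}^n$ (true losses) and $M=(M_t)_{t=1}^n$ (model) be real-valued stochastic processes on a probability space $(\Omega,\mathcal F,\mathsf P)$. Assume that for each $t$ the conditional distribution function $F_{M_t\mid M_{t-1},\dots,M_1}(x\mid y_{t-1},\dots,y_1)$ is continuous in $x$. Define the conditional quantile function $q^{t-1}_{M_t}(u)=\inf\{x: F_{M_t\mid M_{t-1},\dots,M_1}(x\mid L_{t-1},\dots,L_1)\ge u\}$, i.e. the quantile of the model's conditional law of $M_t$ evaluated at the observations $M_{t-1}=L_{t-1},\dots,M_1=L_1$. A distortion function is a non-decreasing $g:[0,1]\to[0,1]$ with $g(0)=0$, $g(1)=1$. Let $g$ be a left-continuous distortion function and let $G$ be a $[0,1]$-valued random variable, independent of $L$ and $M$, with $\mathsf P(G<u)=g(u)$ for all $u\in[0,1]$ (equivalently $G=1-\bar G$ where $\bar G$ has distribution function $\bar g(q)=1-g(1-q)$). Let $0=\alpha_0<\alpha_1<\dots<\alpha_m<\alpha_{m+1}=1$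 be a partition with $g(\alpha_j)-g(\alpha_{j-1})\neq0$ for all $j=1,\dots,m+1$. Let $(G_{t,j})_{t=1,\dots,n;\,j=1,\dots,m+1}$ be independent random variables, independent of $(L,M)$, where $G_{t,j}$ has the conditional law of $G$ given $G\in[\alpha_{j-1},\alpha_j)$. The randomized exception indicators are $\mathbf 1_{t,j}=1$ if $L_t>q^{t-1}_{M_t}(1-G_{t,j})$ and $\mathbf 1_{t,j}=0$ otherwise. *)

theory Defs
  imports "HOL-Probability.Probability"
begin

definition hist :: "(nat \<Rightarrow> 'a \<Rightarrow> real) \<Rightarrow> nat \<Rightarrow> 'a \<Rightarrow> nat \<Rightarrow> real" where
  "hist X t \<omega> = (\<lambda>i\<in>{1..<t}. X i \<omega>)"

text \<open>F is (a version of) the conditional distribution function of X_t given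
  (X_{t-1},...,X_1): F x y is, for every history y, a distribution function in x,
  it is measurable in y, and it integrates to the joint law.\<close>
definition cond_cdf ::
  "'a measure \<Rightarrow> (nat \<Rightarrow> 'a \<Rightarrow> real) \<Rightarrow> nat \<Rightarrow> (real \<Rightarrow> (nat \<Rightarrow> real) \<Rightarrow> real) \<Rightarrow> bool" where
  "cond_cdf P X t F \<longleftrightarrow>
     (\<forall>y. mono (\<lambda>x. F x y) \<and> ((\<lambda>x. F x y) \<longlongrightarrow> 0) at_bot \<and> ((\<lambda>x. F x y) \<longlongrightarrow> 1) at_top
          \<and> (\<forall>x. continuous (at_right x) (\<lambda>x. F x y))) \<and>
     (\<forall>x. (\<lambda>y. F x y) \<in> borel_measurable (PiM {1..<t} (\<lambda>_. borel))) \<and>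
     (\<forall>x. \<forall>B\<in>sets (PiM {1..<t} (\<lambda>_. borel)).
        measure P {\<omega>\<in>space P. X t \<omega> \<le> x \<and> hist X t \<omega> \<in> B}
        = (\<integral>\<omega>. indicator B (hist X t \<omega>) * F x (hist X t \<omega>) \<partial>P))"

text \<open>Generalised inverse (quantile) of a distribution function, with values in
  the extended reals (Inf of the empty set is +\<infinity>, of an unbounded set -\<infinity>).\<close>
definition cquantile :: "(real \<Rightarrow> real) \<Rightarrow> real \<Rightarrow> ereal" where
  "cquantile F u = Inf {ereal x | x. F x \<ge> u}"

definition left_cont_distortion :: "(real \<Rightarrow> real) \<Rightarrow> bool" where
  "left_cont_distortion g \<longleftrightarrow> mono_on {0..1} g \<and> g ` {0..1} \<subseteq> {0..1} \<and> g 0 = 0 \<and> g 1 = 1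
     \<and> (\<forall>u\<in>{0<..1}. continuous (at_left u) g)"

text \<open>Randomized exception indicator 1_{t,j}: L_t > q^{t-1}_{M_t}(1 - G_{t,j}), where
  F t is the conditional cdf of M_t given M_{t-1},...,M_1, evaluated at the history of L.\<close>
definition exc_ind ::
  "(nat \<Rightarrow> real \<Rightarrow> (nat \<Rightarrow> real) \<Rightarrow> real) \<Rightarrow> (nat \<Rightarrow> 'a \<Rightarrow> real) \<Rightarrow> (nat \<Rightarrow> nat \<Rightarrow> 'a \<Rightarrow> real)
     \<Rightarrow> nat \<Rightarrow> nat \<Rightarrow> 'a \<Rightarrow> real" where
  "exc_ind F L Gr t j \<omega> =
     (if ereal (L t \<omega>) > cquantile (\<lambda>x. F t x (hist L t \<omega>)) (1 - Gr t j \<omega>) then 1 else 0)"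

end

theory Submission
  imports Defs
begin

text \<open>Write U_t = F_t(L_t | L_{t-1}, ..., L_1). Since L has the law of M, F_t is also a continuous
  conditional distribution function of L_t given the past of L, so U_t is uniform on [0,1] and
  independent of that past (conditional probability integral transform). Hence U_1, ..., U_n are
  independent uniforms and, being functions of (L, M), independent of the randomisations G_{t,j}.
  As U_t has no atoms, the exception L_t > q(1 - G_{t,j}) occurs almost surely exactly when
  1 - G_{t,j} < U_t. So the expected exception is P(U_t > 1 - G_{t,j}) = E G_{t,j}, which the law of
  G_{t,j} turns into the stated ratio, and the exception vectors are independent as functions of
  the disjoint blocks (U_t, G_{t,1}, ..., G_{t,m+1}).\<close>

section \<open>Measurability of Caratheodory functions\<close>

definition dyadic_round :: "nat \<Rightarrow> real \<Rightarrow> real" where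
  "dyadic_round i x = real_of_int (max (- int (i * 2^i)) (min (int (i * 2^i)) \<lceil>x * 2^i\<rceil>)) / 2^i"

lemma finite_range_dyadic_round: "finite (range (dyadic_round i))"
proof (rule finite_subset)
  show "range (dyadic_round i) \<subseteq> (\<lambda>z. real_of_int z / 2^i) ` {- int (i * 2^i) .. int (i * 2^i)}"
    unfolding dyadic_round_def by (intro image_subsetI imageI) auto
qed simp

lemma borel_measurable_dyadic_round[measurable]: "dyadic_round i \<in> borel_measurable borel"
  unfolding dyadic_round_def by measurable

lemma eventually_dyadic_round_bounds:
  "eventually (\<lambda>i. x \<le> dyadic_round i x \<and> dyadic_round i x \<le> x + 1/2^i) sequentially"
proof -
  obtain N :: nat where N: "\<bar>x\<bar> + 1 \<le> real N" using real_arch_simple by blast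
  show ?thesis unfolding eventually_sequentially
  proof (intro exI allI impI)
    fix i assume "N \<le> i"
    then have "(\<bar>x\<bar> + 1) * 2^i \<le> real i * 2^i" using N by (intro mult_right_mono) auto
    moreover have "\<bar>x * 2^i\<bar> = \<bar>x\<bar> * 2^i" by (simp add: abs_mult)
    moreover have "x * 2^i \<le> real_of_int \<lceil>x * 2^i\<rceil>" "real_of_int \<lceil>x * 2^i\<rceil> < x * 2^i + 1"
      by linarith+
    moreover have "(1::real) \<le> 2^i" by simp
    ultimately have "\<bar>real_of_int \<lceil>x * 2^i\<rceil>\<bar> \<le> real i * 2^i"
      using abs_ge_self[of "x * 2^i"] abs_ge_minus_self[of "x * 2^i"]
      unfolding abs_le_iff distrib_right by linarith
    then have "real_of_int \<bar>\<lceil>x * 2^i\<rceil>\<bar> \<le> real_of_int (int (i * 2^i))" by simp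
    then have "\<bar>\<lceil>x * 2^i\<rceil>\<bar> \<le> int (i * 2^i)" by (simp only: of_int_le_iff)
    then have "dyadic_round i x = real_of_int \<lceil>x * 2^i\<rceil> / 2^i"
      unfolding dyadic_round_def by (simp add: abs_le_iff)
    moreover have "real_of_int \<lceil>x * 2^i\<rceil> \<le> x * 2^i + 1" by linarith
    ultimately show "x \<le> dyadic_round i x \<and> dyadic_round i x \<le> x + 1/2^i"
      by (simp add: pos_le_divide_eq pos_divide_le_eq algebra_simps)
  qed
qed

lemma dyadic_round_tendsto: "(\<lambda>i. dyadic_round i x) \<longlonglongrightarrow> x"
proof (rule tendsto_sandwich[of "\<lambda>i. x" _ _ "\<lambda>i. x + (1/2)^i"])
  show "\<forall>\<^sub>F i in sequentially. x \<le> dyadic_round i x"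
    "\<forall>\<^sub>F i in sequentially. dyadic_round i x \<le> x + (1/2)^i"
    using eventually_dyadic_round_bounds[of x] by (auto elim: eventually_mono simp: power_one_over)
  show "(\<lambda>i. x + (1/2::real)^i) \<longlonglongrightarrow> x"
    using tendsto_add[OF tendsto_const LIMSEQ_power_zero[of "1/2::real"]] by simp
qed simp

text \<open>Rounding the real argument up to a (clipped) dyadic grid makes the function a finite sum
  of measurable pieces; continuity lets the rounding go to the limit.\<close>
lemma borel_measurable_caratheodory:
  fixes F :: "real \<Rightarrow> 'b \<Rightarrow> real"
  assumes F: "\<And>x. F x \<in> borel_measurable N"
    and F_cont: "\<And>y. continuous_on UNIV (\<lambda>x. F x y)"
    and g: "g \<in> borel_measurable M" and k: "k \<in> measurable M N"
  shows "(\<lambda>\<omega>. F (g \<omega>) (k \<omega>)) \<in> borel_measurable M"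
proof (rule borel_measurable_LIMSEQ_real[where u="\<lambda>i \<omega>. F (dyadic_round i (g \<omega>)) (k \<omega>)"])
  fix \<omega>
  have "isCont (\<lambda>x. F x (k \<omega>)) (g \<omega>)"
    using F_cont continuous_on_eq_continuous_at[OF open_UNIV] by fast
  then show "(\<lambda>i. F (dyadic_round i (g \<omega>)) (k \<omega>)) \<longlonglongrightarrow> F (g \<omega>) (k \<omega>)"
    by (rule isCont_tendsto_compose[OF _ dyadic_round_tendsto])
next
  fix i
  have "(\<lambda>\<omega>. F (dyadic_round i (g \<omega>)) (k \<omega>)) =
      (\<lambda>\<omega>. \<Sum>v\<in>range (dyadic_round i). indicator {v} (dyadic_round i (g \<omega>)) * F v (k \<omega>))"
    by (auto simp: indicator_def finite_range_dyadic_round sum.delta' intro!: ext)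
  moreover have "(\<lambda>\<omega>. F v (k \<omega>)) \<in> borel_measurable M" for v
    using measurable_compose[OF k F] .
  ultimately show "(\<lambda>\<omega>. F (dyadic_round i (g \<omega>)) (k \<omega>)) \<in> borel_measurable M"
    using g by simp
qed

section \<open>The conditional probability integral transform\<close>

lemma cdf_bounds:
  fixes f :: "real \<Rightarrow> real"
  assumes "mono f" and "(f \<longlongrightarrow> 0) at_bot" and "(f \<longlongrightarrow> 1) at_top"
  shows "0 \<le> f x \<and> f x \<le> 1"
proof
  have "\<forall>\<^sub>F z in at_bot. f z \<le> f x"
    using \<open>mono f\<close> by (auto simp: eventually_at_bot_linorder intro: exI[of _ x] monoD)
  with \<open>(f \<longlongrightarrow> 0) at_bot\<close> show "0 \<le> f x" by (rule tendsto_upperbound) simp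
  have "\<forall>\<^sub>F z in at_top. f x \<le> f z"
    using \<open>mono f\<close> by (auto simp: eventually_at_top_linorder intro: exI[of _ x] monoD)
  with \<open>(f \<longlongrightarrow> 1) at_top\<close> show "f x \<le> 1" by (rule tendsto_lowerbound) simp
qed

lemma continuous_cdf_Sup_le:
  fixes f :: "real \<Rightarrow> real"
  assumes cont: "continuous_on UNIV f" and "mono f"
    and lim0: "(f \<longlongrightarrow> 0) at_bot" and lim1: "(f \<longlongrightarrow> 1) at_top" and u: "0 < u" "u < 1"
  shows "f x \<le> u \<longleftrightarrow> x \<le> Sup {x. f x \<le> u}" and "f (Sup {x. f x \<le> u}) = u"
proof -
  let ?q = "Sup {x. f x \<le> u}"
  obtain a where a: "\<And>z. z \<le> a \<Longrightarrow> f z < u"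
    using order_tendstoD(2)[OF lim0 u(1)] unfolding eventually_at_bot_linorder by blast
  obtain b where b: "\<And>z. b \<le> z \<Longrightarrow> u < f z"
    using order_tendstoD(1)[OF lim1 u(2)] unfolding eventually_at_top_linorder by blast
  have bdd: "bdd_above {x. f x \<le> u}"
    by (rule bdd_aboveI[of _ b]) (metis b mem_Collect_eq not_le less_imp_le)
  have "?q \<in> {x. f x \<le> u}"
    using less_imp_le[OF a[of a]]
    by (intro closed_contains_Sup bdd closed_Collect_le cont continuous_on_const) auto
  then have fq: "f ?q \<le> u" by simp
  show le_iff: "f x \<le> u \<longleftrightarrow> x \<le> ?q" for x
  proof
    assume "f x \<le> u"
    then show "x \<le> ?q" by (intro cSup_upper bdd) simp
  next
    assume "x \<le> ?q"
    then show "f x \<le> u" using monoD[OF \<open>mono f\<close>] fq by (meson order_trans)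
  qed
  have fb: "u \<le> f (max b ?q)" using b[of "max b ?q"] by simp
  obtain z where "?q \<le> z" "f z = u"
    using IVT'[OF fq fb max.cobounded2 continuous_on_subset[OF cont]] by auto
  with le_iff[of z] show "f ?q = u" by simp
qed

locale real_cond_cdf = prob_space P for P :: "'a measure" +
  fixes X :: "'a \<Rightarrow> real" and Y :: "'a \<Rightarrow> 'b" and N :: "'b measure"
    and F :: "real \<Rightarrow> 'b \<Rightarrow> real"
  assumes X[measurable]: "X \<in> borel_measurable P"
    and Y[measurable]: "Y \<in> measurable P N"
    and F_meas: "\<And>x. F x \<in> borel_measurable N"
    and F_cont: "\<And>y. continuous_on UNIV (\<lambda>x. F x y)"
    and F_mono: "\<And>y. mono (\<lambda>x. F x y)"
    and F_at_bot: "\<And>y. ((\<lambda>x. F x y) \<longlongrightarrow> 0) at_bot"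
    and F_at_top: "\<And>y. ((\<lambda>x. F x y) \<longlongrightarrow> 1) at_top"
    and prob_le_eq: "\<And>x B. B \<in> sets N \<Longrightarrow>
      prob {\<omega>\<in>space P. X \<omega> \<le> x \<and> Y \<omega> \<in> B} = (\<integral>\<omega>. indicator B (Y \<omega>) * F x (Y \<omega>) \<partial>P)"
begin

lemma F_bounds: "0 \<le> F x y \<and> F x y \<le> 1"
  using cdf_bounds[OF F_mono F_at_bot F_at_top] .

lemma borel_measurable_F_comp[measurable]:
  "g \<in> borel_measurable P \<Longrightarrow> (\<lambda>\<omega>. F (g \<omega>) (Y \<omega>)) \<in> borel_measurable P"
  using borel_measurable_caratheodory[OF F_meas F_cont _ Y] .

lemma integrable_F_comp:
  assumes "g \<in> borel_measurable P" and [measurable]: "B \<in> sets N"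
  shows "integrable P (\<lambda>\<omega>. indicator B (Y \<omega>) * F (g \<omega>) (Y \<omega>))"
  by (rule integrable_const_bound[where B=1]) (use assms F_bounds in \<open>auto simp: indicator_def\<close>)

lemma prob_le_finite_threshold:
  assumes [measurable]: "h \<in> borel_measurable N" "B \<in> sets N" and R: "finite R" "range h \<subseteq> R"
  shows "prob {\<omega>\<in>space P. X \<omega> \<le> h (Y \<omega>) \<and> Y \<omega> \<in> B}
       = (\<integral>\<omega>. indicator B (Y \<omega>) * F (h (Y \<omega>)) (Y \<omega>) \<partial>P)"
proof -
  define B' where "B' v = B \<inter> {y\<in>space N. h y = v}" for v
  have [measurable]: "B' v \<in> sets N" for v unfolding B'_def by measurable
  have split: "indicator B y * f (h y) = (\<Sum>v\<in>R. indicator (B' v) y * f v)"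
    if "y \<in> space N" for y and f :: "real \<Rightarrow> real"
    using that R by (auto simp: B'_def indicator_def sum.delta' subset_iff intro!: sum.neutral)
  have "prob {\<omega>\<in>space P. X \<omega> \<le> h (Y \<omega>) \<and> Y \<omega> \<in> B}
      = (\<integral>\<omega>. indicator {\<omega>\<in>space P. X \<omega> \<le> h (Y \<omega>) \<and> Y \<omega> \<in> B} \<omega> \<partial>P)"
    by (simp add: Int_absorb2)
  also have "\<dots> = (\<integral>\<omega>. (\<Sum>v\<in>R. indicator {\<omega>\<in>space P. X \<omega> \<le> v \<and> Y \<omega> \<in> B' v} \<omega>) \<partial>P)"
  proof (rule Bochner_Integration.integral_cong[OF refl])
    fix \<omega> assume \<omega>: "\<omega> \<in> space P"
    show "indicator {\<omega>\<in>space P. X \<omega> \<le> h (Y \<omega>) \<and> Y \<omega> \<in> B} \<omega>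
        = (\<Sum>v\<in>R. indicator {\<omega>\<in>space P. X \<omega> \<le> v \<and> Y \<omega> \<in> B' v} \<omega> :: real)"
      using split[of "Y \<omega>" "\<lambda>v. of_bool (X \<omega> \<le> v)"] measurable_space[OF Y \<omega>] \<omega>
      by (simp add: indicator_def of_bool_conj mult.commute)
  qed
  also have "\<dots> = (\<Sum>v\<in>R. prob {\<omega>\<in>space P. X \<omega> \<le> v \<and> Y \<omega> \<in> B' v})"
    by (subst Bochner_Integration.integral_sum)
       (auto intro!: integrable_real_indicator simp: Int_absorb2 emeasure_eq_measure)
  also have "\<dots> = (\<Sum>v\<in>R. (\<integral>\<omega>. indicator (B' v) (Y \<omega>) * F v (Y \<omega>) \<partial>P))"
    by (simp add: prob_le_eq)
  also have "\<dots> = (\<integral>\<omega>. (\<Sum>v\<in>R. indicator (B' v) (Y \<omega>) * F v (Y \<omega>)) \<partial>P)"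
    by (subst Bochner_Integration.integral_sum) (auto intro!: integrable_F_comp)
  also have "\<dots> = (\<integral>\<omega>. indicator B (Y \<omega>) * F (h (Y \<omega>)) (Y \<omega>) \<partial>P)"
    using split[of "Y _" "\<lambda>v. F v (Y _)"] measurable_space[OF Y]
    by (intro Bochner_Integration.integral_cong) auto
  finally show ?thesis .
qed

lemma prob_le_threshold:
  assumes [measurable]: "h \<in> borel_measurable N" "B \<in> sets N"
  shows "prob {\<omega>\<in>space P. X \<omega> \<le> h (Y \<omega>) \<and> Y \<omega> \<in> B}
       = (\<integral>\<omega>. indicator B (Y \<omega>) * F (h (Y \<omega>)) (Y \<omega>) \<partial>P)"
proof -
  define S where "S i = {\<omega>\<in>space P. X \<omega> \<le> dyadic_round i (h (Y \<omega>)) \<and> Y \<omega> \<in> B}" for i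
  define S' where "S' = {\<omega>\<in>space P. X \<omega> \<le> h (Y \<omega>) \<and> Y \<omega> \<in> B}"
  have [measurable]: "S i \<in> sets P" "S' \<in> sets P" for i unfolding S_def S'_def by measurable
  have lim_indicator: "(\<lambda>i. indicator (S i) \<omega> :: real) \<longlonglongrightarrow> indicator S' \<omega>"
    if "\<omega> \<in> space P" for \<omega>
  proof (rule tendsto_eventually)
    consider "X \<omega> \<le> h (Y \<omega>)" | "h (Y \<omega>) < X \<omega>" by linarith
    then have "\<forall>\<^sub>F i in sequentially. X \<omega> \<le> dyadic_round i (h (Y \<omega>)) \<longleftrightarrow> X \<omega> \<le> h (Y \<omega>)"
    proof cases
      case 1
      with eventually_dyadic_round_bounds[of "h (Y \<omega>)"] show ?thesis
        by (auto elim: eventually_mono)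
    next
      case 2
      with order_tendstoD(2)[OF dyadic_round_tendsto 2] show ?thesis
        by (auto elim: eventually_mono)
    qed
    then show "\<forall>\<^sub>F i in sequentially. indicator (S i) \<omega> = (indicator S' \<omega> :: real)"
      by eventually_elim (use that in \<open>auto simp: S_def S'_def indicator_def\<close>)
  qed
  have "(\<lambda>i. \<integral>\<omega>. indicator (S i) \<omega> \<partial>P) \<longlonglongrightarrow> (\<integral>\<omega>. indicator S' \<omega> \<partial>P :: real)"
  proof (rule Bochner_Integration.integral_dominated_convergence[where w="\<lambda>_. 1"])
    show "AE \<omega> in P. norm (indicator (S i) \<omega> :: real) \<le> 1" for i
      by (simp add: indicator_def)
  qed (use lim_indicator in \<open>auto intro: AE_I2\<close>)
  then have lim_prob: "(\<lambda>i. prob (S i)) \<longlonglongrightarrow> prob S'"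
    by (simp add: Int_absorb2)
  have lim_F: "(\<lambda>i. F (dyadic_round i (h y)) y) \<longlonglongrightarrow> F (h y) y" for y
    using F_cont[of y] continuous_on_eq_continuous_at[OF open_UNIV]
    by (intro isCont_tendsto_compose[OF _ dyadic_round_tendsto]) fast
  have lim_integral: "(\<lambda>i. \<integral>\<omega>. indicator B (Y \<omega>) * F (dyadic_round i (h (Y \<omega>))) (Y \<omega>) \<partial>P)
      \<longlonglongrightarrow> (\<integral>\<omega>. indicator B (Y \<omega>) * F (h (Y \<omega>)) (Y \<omega>) \<partial>P)"
  proof (rule Bochner_Integration.integral_dominated_convergence[where w="\<lambda>_. 1"])
    show "AE \<omega> in P. norm (indicator B (Y \<omega>) * F (dyadic_round i (h (Y \<omega>))) (Y \<omega>)) \<le> (1::real)" for i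
      using F_bounds by (auto simp: indicator_def)
  qed (auto intro!: AE_I2 tendsto_mult tendsto_const lim_F)
  have "prob (S i) = (\<integral>\<omega>. indicator B (Y \<omega>) * F (dyadic_round i (h (Y \<omega>))) (Y \<omega>) \<partial>P)" for i
    unfolding S_def
    by (rule prob_le_finite_threshold[OF _ _ finite_range_dyadic_round]) auto
  with lim_integral have "(\<lambda>i. prob (S i)) \<longlonglongrightarrow> (\<integral>\<omega>. indicator B (Y \<omega>) * F (h (Y \<omega>)) (Y \<omega>) \<partial>P)"
    by simp
  from LIMSEQ_unique[OF lim_prob this] show ?thesis
    unfolding S'_def .
qed

text \<open>F(X, Y) \<le> u means X \<le> q(Y) for the largest u-quantile q(Y), where F equals u.\<close>
lemma prob_F_le_interior:
  assumes u: "0 < u" "u < 1" and [measurable]: "B \<in> sets N"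
  shows "prob {\<omega>\<in>space P. F (X \<omega>) (Y \<omega>) \<le> u \<and> Y \<omega> \<in> B} = u * prob {\<omega>\<in>space P. Y \<omega> \<in> B}"
proof -
  define q where "q y = Sup {x. F x y \<le> u}" for y
  note q_props = continuous_cdf_Sup_le[OF F_cont F_mono F_at_bot F_at_top u, folded q_def]
  have [measurable]: "q \<in> borel_measurable N"
    unfolding borel_measurable_iff_less
  proof
    fix c
    have "{y \<in> space N. q y < c} = {y \<in> space N. u < F c y}"
      using q_props(1) by (auto simp: not_le[symmetric])
    then show "{y \<in> space N. q y < c} \<in> sets N"
      using F_meas[of c] by simp
  qed
  have "prob {\<omega>\<in>space P. F (X \<omega>) (Y \<omega>) \<le> u \<and> Y \<omega> \<in> B}
      = prob {\<omega>\<in>space P. X \<omega> \<le> q (Y \<omega>) \<and> Y \<omega> \<in> B}"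
    using q_props(1) by simp
  also have "\<dots> = (\<integral>\<omega>. indicator B (Y \<omega>) * u \<partial>P)"
    by (simp add: prob_le_threshold q_props(2))
  also have "\<dots> = (\<integral>\<omega>. indicator {\<omega>\<in>space P. Y \<omega> \<in> B} \<omega> \<partial>P) * u"
    by (subst integral_mult_left_zero[symmetric])
       (auto intro!: Bochner_Integration.integral_cong simp: indicator_def)
  also have "\<dots> = u * prob {\<omega>\<in>space P. Y \<omega> \<in> B}"
    by (simp add: Int_absorb2)
  finally show ?thesis .
qed

lemma prob_F_le:
  assumes [measurable]: "B \<in> sets N"
  shows "prob {\<omega>\<in>space P. F (X \<omega>) (Y \<omega>) \<le> c \<and> Y \<omega> \<in> B}
       = max 0 (min 1 c) * prob {\<omega>\<in>space P. Y \<omega> \<in> B}"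
proof -
  consider "c < 0" | "c = 0" | "0 < c \<and> c < 1" | "1 \<le> c" by linarith
  then show ?thesis
  proof cases
    case 1
    have "c < F x y" for x y
      using 1 F_bounds[of x y] by linarith
    then have "{\<omega>\<in>space P. F (X \<omega>) (Y \<omega>) \<le> c \<and> Y \<omega> \<in> B} = {}"
      by (simp add: not_le[symmetric])
    then show ?thesis
      using 1 by (simp only:) simp
  next
    case 2
    have "prob {\<omega>\<in>space P. F (X \<omega>) (Y \<omega>) \<le> 0 \<and> Y \<omega> \<in> B} \<le> 0 + e" if "0 < e" for e
    proof -
      have "prob {\<omega>\<in>space P. F (X \<omega>) (Y \<omega>) \<le> 0 \<and> Y \<omega> \<in> B}
          \<le> prob {\<omega>\<in>space P. F (X \<omega>) (Y \<omega>) \<le> min e (1/2) \<and> Y \<omega> \<in> B}"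
        using that by (intro finite_measure_mono) auto
      also have "\<dots> = min e (1/2) * prob {\<omega>\<in>space P. Y \<omega> \<in> B}"
        using that by (intro prob_F_le_interior) auto
      also have "\<dots> \<le> min e (1/2) * 1"
        using that by (intro mult_left_mono) auto
      finally show ?thesis by simp
    qed
    then have "prob {\<omega>\<in>space P. F (X \<omega>) (Y \<omega>) \<le> 0 \<and> Y \<omega> \<in> B} \<le> 0"
      by (rule field_le_epsilon)
    then show ?thesis
      using 2 antisym[OF _ measure_nonneg] by simp
  next
    case 3
    then show ?thesis by (simp add: prob_F_le_interior)
  next
    case 4
    have "F x y \<le> c" for x y
      using 4 F_bounds[of x y] by linarith
    then show ?thesis
      using 4 by simp
  qed
qed

end

section \<open>Generalised quantiles\<close>

lemma cquantile_less_of_less: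
  fixes f :: "real \<Rightarrow> real"
  assumes "isCont f x" and "u < f x"
  shows "cquantile f u < ereal x"
proof -
  have "(f \<longlongrightarrow> f x) (at_left x)"
    using \<open>isCont f x\<close> by (simp add: isCont_def filterlim_at_split)
  from order_tendstoD(1)[OF this \<open>u < f x\<close>] obtain b where b: "b < x" "\<And>y. b < y \<Longrightarrow> y < x \<Longrightarrow> u < f y"
    unfolding eventually_at_left[of "x - 1" x, simplified] by blast
  have "u \<le> f ((b + x) / 2)" using b by (intro less_imp_le) simp
  then have "cquantile f u \<le> ereal ((b + x) / 2)"
    unfolding cquantile_def by (intro Inf_lower) blast
  also have "\<dots> < ereal x" using b(1) by simp
  finally show ?thesis .
qed

lemma ereal_le_cquantile_of_less:
  fixes f :: "real \<Rightarrow> real"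
  assumes "mono f" and "f x < u"
  shows "ereal x \<le> cquantile f u"
  unfolding cquantile_def
proof (rule Inf_greatest)
  fix e assume "e \<in> {ereal x |x. u \<le> f x}"
  then obtain z where "e = ereal z" "u \<le> f z" by auto
  moreover have "\<not> z \<le> x"
    using \<open>u \<le> f z\<close> \<open>f x < u\<close> monoD[OF \<open>mono f\<close>, of z x] by linarith
  ultimately show "ereal x \<le> e" by simp
qed

lemma cquantile_less_iff_rat:
  fixes f :: "real \<Rightarrow> real"
  assumes "mono f"
  shows "cquantile f u < ereal x \<longleftrightarrow> (\<exists>r\<in>\<rat>. r < x \<and> u \<le> f r)"
proof
  assume "cquantile f u < ereal x"
  then obtain z where z: "u \<le> f z" "z < x"
    unfolding cquantile_def Inf_less_iff by auto
  then obtain r where r: "r \<in> \<rat>" "z < r" "r < x" using Rats_dense_in_real by blast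
  with z monoD[OF \<open>mono f\<close>, of z r] show "\<exists>r\<in>\<rat>. r < x \<and> u \<le> f r" by force
next
  assume "\<exists>r\<in>\<rat>. r < x \<and> u \<le> f r"
  then obtain r where r: "r < x" "u \<le> f r" by auto
  then have "cquantile f u \<le> ereal r" unfolding cquantile_def by (intro Inf_lower) auto
  also have "\<dots> < ereal x" using r by simp
  finally show "cquantile f u < ereal x" .
qed

section \<open>Independence and uniform random variables\<close>

lemma (in prob_space) indep_vars_real_cdfI:
  fixes X :: "'i \<Rightarrow> 'a \<Rightarrow> real"
  assumes rv: "\<And>i. i \<in> I \<Longrightarrow> random_variable borel (X i)"
    and prod: "\<And>J c. J \<subseteq> I \<Longrightarrow> finite J \<Longrightarrow> J \<noteq> {} \<Longrightarrow>
      prob {\<omega>\<in>space M. \<forall>i\<in>J. X i \<omega> \<le> c i} = (\<Prod>i\<in>J. prob {\<omega>\<in>space M. X i \<omega> \<le> c i})"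
  shows "indep_vars (\<lambda>_. borel) X I"
proof -
  define E where "E i = range (\<lambda>c. {\<omega>\<in>space M. X i \<omega> \<le> c})" for i
  have "indep_sets E I"
  proof (rule indep_setsI)
    show "E i \<subseteq> events" if "i \<in> I" for i
      using rv[OF that] by (auto simp: E_def)
    fix A J assume J: "J \<noteq> {}" "J \<subseteq> I" "finite J" and A: "\<forall>j\<in>J. A j \<in> E j"
    then have "\<forall>j\<in>J. \<exists>c. A j = {\<omega>\<in>space M. X j \<omega> \<le> c}"
      by (auto simp: E_def)
    then obtain c where c: "\<forall>j\<in>J. A j = {\<omega>\<in>space M. X j \<omega> \<le> c j}"
      by (rule bchoice[elim_format]) (elim exE)
    have "\<Inter> (A ` J) = {\<omega>\<in>space M. \<forall>j\<in>J. X j \<omega> \<le> c j}"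
      using J(1) by (auto simp: c)
    then show "prob (\<Inter> (A ` J)) = (\<Prod>j\<in>J. prob (A j))"
      using prod[OF J(2,3,1)] by (simp add: c)
  qed
  moreover have "Int_stable (E i)" for i
  proof (rule Int_stableI)
    fix a b assume "a \<in> E i" "b \<in> E i"
    then obtain c d where "a = {\<omega>\<in>space M. X i \<omega> \<le> c}" "b = {\<omega>\<in>space M. X i \<omega> \<le> d}"
      by (auto simp: E_def)
    then have "a \<inter> b = {\<omega>\<in>space M. X i \<omega> \<le> min c d}" by auto
    then show "a \<inter> b \<in> E i" unfolding E_def by (simp only:) (rule rangeI)
  qed
  ultimately have indep_E: "indep_sets (\<lambda>i. sigma_sets (space M) (E i)) I"
    by (rule indep_sets_sigma)
  have gen: "{X i -` A \<inter> space M |A. A \<in> sets borel} = sigma_sets (space M) (E i)" for i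
  proof -
    have "sets (borel :: real measure) = sigma_sets UNIV (range atMost)"
      by (subst borel_eq_atMost) (rule sets_measure_of, simp)
    then have "{X i -` A \<inter> space M |A. A \<in> sets borel}
        = {X i -` A \<inter> space M |A. A \<in> sigma_sets UNIV (range atMost)}"
      by (simp only:)
    also have "\<dots> = sigma_sets (space M) {X i -` A \<inter> space M |A. A \<in> range atMost}"
      by (rule sigma_sets_vimage_commute) simp
    also have "{X i -` A \<inter> space M |A. A \<in> range atMost} = E i"
    proof (intro equalityI subsetI)
      fix B assume "B \<in> {X i -` A \<inter> space M |A. A \<in> range atMost}"
      then obtain c where "B = X i -` {..c} \<inter> space M" by blast
      then show "B \<in> E i" unfolding E_def by (intro image_eqI[OF _ UNIV_I]) auto
    next
      fix B assume "B \<in> E i"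
      then obtain c where "B = {\<omega>\<in>space M. X i \<omega> \<le> c}" unfolding E_def by blast
      then show "B \<in> {X i -` A \<inter> space M |A. A \<in> range atMost}"
        by (intro CollectI exI[of _ "{..c}"]) auto
    qed
    finally show ?thesis .
  qed
  show ?thesis
    unfolding indep_vars_def
  proof (intro conjI ballI rv)
    show "indep_sets (\<lambda>i. sigma_sets (space M) {X i -` A \<inter> space M |A. A \<in> sets borel}) I"
      using indep_E by (rule indep_sets_mono_sets) (intro sigma_sets_mono, simp only: gen)
  qed
qed

lemma (in prob_space) indep_sets_events:
  "indep_sets F I \<Longrightarrow> i \<in> I \<Longrightarrow> F i \<subseteq> events"
  unfolding indep_sets_def by blast

lemma (in prob_space) indep_sets_refine_option:
  fixes N :: "'a measure"
  assumes indep: "indep_sets (case_option (sets N) B) (insert None (Some ` K))"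
    and N: "space N = space M"
    and C: "indep_sets C I" and CN: "\<And>i. i \<in> I \<Longrightarrow> C i \<subseteq> sets N"
  shows "indep_sets (case_sum C B) (Inl ` I \<union> Inr ` K)"
proof (rule indep_setsI)
  show events: "case_sum C B j \<subseteq> events" if "j \<in> Inl ` I \<union> Inr ` K" for j
    using that indep_sets_events[OF C] indep_sets_events[OF indep, of "Some _"] by force
  fix A J assume J: "J \<noteq> {}" "J \<subseteq> Inl ` I \<union> Inr ` K" "finite J"
    and A: "\<forall>j\<in>J. A j \<in> case_sum C B j"
  define T where "T = Inl -` J"
  define S where "S = Inr -` J"
  have T: "finite T" "T \<subseteq> I" and S: "finite S" "S \<subseteq> K"
    using J by (auto simp: T_def S_def intro: finite_vimageI)
  have J_eq: "J = Inl ` T \<union> Inr ` S"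
    by (auto simp: T_def S_def image_iff) (metis sum.exhaust)
  have A_T: "A (Inl t) \<in> C t" if "t \<in> T" for t
    using A that by (auto simp: T_def)
  have "A j \<in> events" if "j \<in> J" for j
    using A that J(2) events by blast
  then have "\<Inter> (A ` J) \<subseteq> space M"
    using J(1) sets.sets_into_space by blast
  define E where "E = (\<Inter>t\<in>T. A (Inl t)) \<inter> space M"
  have E: "E \<in> sets N \<and> prob E = (\<Prod>t\<in>T. prob (A (Inl t)))"
  proof (cases "T = {}")
    case True
    have "space M \<in> sets N" using sets.top[of N] N by simp
    then show ?thesis using True by (simp add: E_def prob_space)
  next
    case False
    obtain t0 where t0: "t0 \<in> T" using False by blast
    then have "A (Inl t0) \<in> events"
      using A_T T(2) indep_sets_events[OF C, of t0] by blast
    then have "A (Inl t0) \<subseteq> space M" by (rule sets.sets_into_space)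
    then have "(\<Inter>t\<in>T. A (Inl t)) \<subseteq> space M" using t0 by blast
    then have "E = (\<Inter>t\<in>T. A (Inl t))" by (auto simp: E_def)
    moreover have "(\<Inter>t\<in>T. A (Inl t)) \<in> sets N"
      using A_T T CN False by (intro sets.finite_INT) auto
    ultimately show ?thesis
      using A_T by (simp add: indep_setsD[OF C T(2) False T(1)])
  qed
  have "\<Inter> (A ` J) = E \<inter> (\<Inter>k\<in>S. A (Inr k))"
    using \<open>\<Inter> (A ` J) \<subseteq> space M\<close> by (auto simp: J_eq E_def)
  also have "prob \<dots> = prob E * (\<Prod>k\<in>S. prob (A (Inr k)))"
  proof -
    define A' where "A' = case_option E (\<lambda>k. A (Inr k))"
    have "prob (\<Inter> (A' ` insert None (Some ` S))) = (\<Prod>k\<in>insert None (Some ` S). prob (A' k))"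
      using S E A by (intro indep_setsD[OF indep]) (auto simp: A'_def S_def)
    then show ?thesis
      using S by (simp add: A'_def prod.reindex image_image)
  qed
  also have "\<dots> = (\<Prod>j\<in>J. prob (A j))"
  proof -
    have "(\<Prod>j\<in>J. prob (A j)) = (\<Prod>j\<in>Inl ` T. prob (A j)) * (\<Prod>j\<in>Inr ` S. prob (A j))"
      unfolding J_eq using T S by (intro prod.union_disjoint) auto
    then show ?thesis using E by (simp add: prod.reindex)
  qed
  finally show "prob (\<Inter> (A ` J)) = (\<Prod>j\<in>J. prob (A j))" .
qed

lemma (in prob_space) indep_vars_AE_cong:
  assumes indep: "indep_vars M' X I" and "I \<noteq> {}"
    and Y: "\<And>i. i \<in> I \<Longrightarrow> random_variable (M' i) (Y i)"
    and eq: "AE \<omega> in M. \<forall>i\<in>I. X i \<omega> = Y i \<omega>"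
  shows "indep_vars M' Y I"
proof -
  have X: "random_variable (M' i) (X i)" if "i \<in> I" for i
    using indep that by (simp add: indep_vars_def)
  have "distr M (M' i) (X i) = distr M (M' i) (Y i)" if "i \<in> I" for i
    using eq that by (intro distr_cong_AE X Y) (auto elim: AE_mp)
  moreover have "distr M (\<Pi>\<^sub>M i\<in>I. M' i) (\<lambda>\<omega>. \<lambda>i\<in>I. X i \<omega>) = distr M (\<Pi>\<^sub>M i\<in>I. M' i) (\<lambda>\<omega>. \<lambda>i\<in>I. Y i \<omega>)"
  proof (intro distr_cong_AE measurable_restrict X Y refl)
    show "AE \<omega> in M. (\<lambda>i\<in>I. X i \<omega>) = (\<lambda>i\<in>I. Y i \<omega>)"
      using eq by eventually_elim (auto intro: restrict_ext)
  qed
  ultimately show ?thesis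
    using indep X Y by (simp add: indep_vars_iff_distr_eq_PiM'[OF \<open>I \<noteq> {}\<close>] cong: PiM_cong)
qed

lemma (in prob_space) emeasure_indep_var_pair:
  fixes X Y :: "'a \<Rightarrow> real"
  assumes indep: "indep_var borel X borel Y" and D: "D \<in> sets (borel \<Otimes>\<^sub>M borel)"
  shows "emeasure M {\<omega>\<in>space M. (X \<omega>, Y \<omega>) \<in> D}
       = (\<integral>\<^sup>+\<omega>. emeasure M {\<omega>'\<in>space M. (X \<omega>', Y \<omega>) \<in> D} \<partial>M)"
proof -
  have X: "X \<in> borel_measurable M" and Y: "Y \<in> borel_measurable M"
    using indep by (blast dest: indep_var_rv1 indep_var_rv2)+
  interpret MX: prob_space "distr M borel X" by (rule prob_space_distr[OF X])
  interpret MY: prob_space "distr M borel Y" by (rule prob_space_distr[OF Y])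
  interpret XY: pair_prob_space "distr M borel X" "distr M borel Y" ..
  have D': "D \<in> sets (distr M borel X \<Otimes>\<^sub>M distr M borel Y)" using D by simp
  have slice: "(\<lambda>x. (x, y)) -` D \<in> sets borel" for y :: real
    using measurable_sets[OF measurable_Pair2' D] by simp
  have "emeasure M {\<omega>\<in>space M. (X \<omega>, Y \<omega>) \<in> D}
      = emeasure (distr M (borel \<Otimes>\<^sub>M borel) (\<lambda>\<omega>. (X \<omega>, Y \<omega>))) D"
    using X Y D by (subst emeasure_distr) (auto intro!: arg_cong[where f="emeasure M"])
  also have "distr M (borel \<Otimes>\<^sub>M borel) (\<lambda>\<omega>. (X \<omega>, Y \<omega>)) = distr M borel X \<Otimes>\<^sub>M distr M borel Y"
    using indep by (simp add: indep_var_distribution_eq)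
  also have "emeasure \<dots> D = (\<integral>\<^sup>+y. emeasure (distr M borel X) ((\<lambda>x. (x, y)) -` D) \<partial>distr M borel Y)"
    by (rule XY.emeasure_pair_measure_alt2[OF D'])
  also have "\<dots> = (\<integral>\<^sup>+\<omega>. emeasure (distr M borel X) ((\<lambda>x. (x, Y \<omega>)) -` D) \<partial>M)"
    by (rule nn_integral_distr[OF Y XY.measurable_emeasure_Pair2[OF D']])
  also have "\<dots> = (\<integral>\<^sup>+\<omega>. emeasure M {\<omega>'\<in>space M. (X \<omega>', Y \<omega>) \<in> D} \<partial>M)"
    using X slice
    by (intro nn_integral_cong) (auto simp: emeasure_distr intro!: arg_cong[where f="emeasure M"])
  finally show ?thesis .
qed

lemma (in prob_space) prob_eq_0_if_uniform:
  assumes [measurable]: "X \<in> borel_measurable M"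
    and cdf: "\<And>c. prob {\<omega>\<in>space M. X \<omega> \<le> c} = max 0 (min 1 c)"
  shows "prob {\<omega>\<in>space M. X \<omega> = c} = 0"
proof -
  have "prob {\<omega>\<in>space M. X \<omega> = c} \<le> 0 + e" if "0 < e" for e
  proof -
    have "prob {\<omega>\<in>space M. X \<omega> = c}
        \<le> prob ({\<omega>\<in>space M. X \<omega> \<le> c} - {\<omega>\<in>space M. X \<omega> \<le> c - e})"
      using that by (intro finite_measure_mono) auto
    also have "\<dots> = prob {\<omega>\<in>space M. X \<omega> \<le> c} - prob {\<omega>\<in>space M. X \<omega> \<le> c - e}"
      using that by (intro finite_measure_Diff) auto
    also have "\<dots> \<le> e"
      unfolding cdf using that by linarith
    finally show ?thesis by simp
  qed
  then have "prob {\<omega>\<in>space M. X \<omega> = c} \<le> 0"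
    by (rule field_le_epsilon)
  then show ?thesis
    using measure_nonneg antisym by blast
qed

lemma (in prob_space) AE_indep_uniform_neq:
  assumes indep: "indep_var borel X borel Y"
    and cdf: "\<And>c. prob {\<omega>\<in>space M. X \<omega> \<le> c} = max 0 (min 1 c)"
    and [measurable]: "h \<in> borel_measurable borel"
  shows "AE \<omega> in M. X \<omega> \<noteq> h (Y \<omega>)"
proof -
  have [measurable]: "X \<in> borel_measurable M" "Y \<in> borel_measurable M"
    using indep by (blast dest: indep_var_rv1 indep_var_rv2)+
  have "{(u, v). u = h v} = {z \<in> space (borel \<Otimes>\<^sub>M borel). fst z = h (snd z)}"
    by (auto simp: space_pair_measure)
  also have "\<dots> \<in> sets (borel \<Otimes>\<^sub>M borel)" by measurable
  finally have "emeasure M {\<omega>\<in>space M. (X \<omega>, Y \<omega>) \<in> {(u, v). u = h v}}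
      = (\<integral>\<^sup>+\<omega>. emeasure M {\<omega>'\<in>space M. (X \<omega>', Y \<omega>) \<in> {(u, v). u = h v}} \<partial>M)"
    by (rule emeasure_indep_var_pair[OF indep])
  also have "\<dots> = (\<integral>\<^sup>+\<omega>. 0 \<partial>M)"
    using prob_eq_0_if_uniform[OF _ cdf] by (simp add: emeasure_eq_measure)
  finally have "{\<omega>\<in>space M. X \<omega> = h (Y \<omega>)} \<in> null_sets M"
    by (simp add: null_sets_def)
  then show ?thesis
    by (rule AE_I') auto
qed

lemma (in prob_space) prob_indep_uniform_greater:
  assumes indep: "indep_var borel X borel Y"
    and cdf: "\<And>c. prob {\<omega>\<in>space M. X \<omega> \<le> c} = max 0 (min 1 c)"
    and Y01: "AE \<omega> in M. Y \<omega> \<in> {0..1}"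
  shows "prob {\<omega>\<in>space M. 1 - Y \<omega> < X \<omega>} = expectation Y"
proof -
  have [measurable]: "X \<in> borel_measurable M" "Y \<in> borel_measurable M"
    using indep by (blast dest: indep_var_rv1 indep_var_rv2)+
  have "{(u, v::real). 1 - v < u} = {z \<in> space (borel \<Otimes>\<^sub>M borel). 1 - snd z < fst z}"
    by (auto simp: space_pair_measure)
  also have "\<dots> \<in> sets (borel \<Otimes>\<^sub>M borel)" by measurable
  finally have "emeasure M {\<omega>\<in>space M. (X \<omega>, Y \<omega>) \<in> {(u, v). 1 - v < u}}
      = (\<integral>\<^sup>+\<omega>. emeasure M {\<omega>'\<in>space M. (X \<omega>', Y \<omega>) \<in> {(u, v). 1 - v < u}} \<partial>M)"
    by (rule emeasure_indep_var_pair[OF indep])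
  also have "\<dots> = (\<integral>\<^sup>+\<omega>. ennreal (Y \<omega>) \<partial>M)"
  proof (rule nn_integral_cong_AE)
    show "AE \<omega> in M. emeasure M {\<omega>'\<in>space M. (X \<omega>', Y \<omega>) \<in> {(u, v). 1 - v < u}} = ennreal (Y \<omega>)"
      using Y01
    proof eventually_elim
      case (elim \<omega>)
      have "{\<omega>'\<in>space M. (X \<omega>', Y \<omega>) \<in> {(u, v). 1 - v < u}}
          = space M - {\<omega>'\<in>space M. X \<omega>' \<le> 1 - Y \<omega>}" by auto
      moreover have "prob (space M - {\<omega>'\<in>space M. X \<omega>' \<le> 1 - Y \<omega>}) = Y \<omega>"
        using elim by (subst prob_compl) (auto simp: cdf)
      ultimately show ?case by (simp add: emeasure_eq_measure)
    qed
  qed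
  also have "\<dots> = ennreal (expectation Y)"
    using Y01 by (intro nn_integral_eq_integral integrable_const_bound[where B=1]) auto
  finally show ?thesis
    using Y01 by (simp add: emeasure_eq_measure integral_nonneg_AE)
qed

lemma (in prob_space) expectation_conditional_law:
  assumes [measurable]: "Y \<in> borel_measurable M" "G \<in> borel_measurable M" "I \<in> sets borel"
    and law: "\<And>A. A \<in> sets borel \<Longrightarrow> prob {\<omega>\<in>space M. Y \<omega> \<in> A}
      = prob {\<omega>\<in>space M. G \<omega> \<in> A \<inter> I} / prob {\<omega>\<in>space M. G \<omega> \<in> I}"
  shows "expectation Y = expectation (\<lambda>\<omega>. G \<omega> * indicator I (G \<omega>)) / prob {\<omega>\<in>space M. G \<omega> \<in> I}"
proof -
  define c where "c = prob {\<omega>\<in>space M. G \<omega> \<in> I}"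
  have "1 = prob {\<omega>\<in>space M. G \<omega> \<in> I} / c"
    using law[of UNIV] by (simp add: c_def prob_space)
  then have "c \<noteq> 0" by (auto simp: c_def)
  then have c: "0 < c"
    using measure_nonneg[of M "{\<omega>\<in>space M. G \<omega> \<in> I}"] unfolding c_def by linarith
  have distr_Y: "distr M borel Y = density (distr M borel G) (\<lambda>x. indicator I x / c)"
  proof (rule measure_eqI)
    fix A assume "A \<in> sets (distr M borel Y)"
    then have [measurable]: "A \<in> sets borel" by simp
    have "emeasure (density (distr M borel G) (\<lambda>x. indicator I x / c)) A
        = (\<integral>\<^sup>+\<omega>. ennreal (1 / c) * indicator {\<omega>\<in>space M. G \<omega> \<in> A \<inter> I} \<omega> \<partial>M)"
      by (simp add: emeasure_density nn_integral_distr)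
         (auto intro!: nn_integral_cong simp: indicator_def)
    also have "\<dots> = ennreal (prob {\<omega>\<in>space M. G \<omega> \<in> A \<inter> I} / c)"
      using c
      by (simp add: nn_integral_cmult emeasure_eq_measure ennreal_mult'[symmetric] measure_nonneg)
    also have "\<dots> = emeasure (distr M borel Y) A"
      by (simp add: emeasure_distr emeasure_eq_measure law c_def vimage_def Int_def conj_commute)
    finally show "emeasure (distr M borel Y) A
        = emeasure (density (distr M borel G) (\<lambda>x. indicator I x / c)) A" ..
  qed simp
  have "expectation Y = (\<integral>x. x \<partial>distr M borel Y)"
    by (simp add: integral_distr)
  also have "\<dots> = (\<integral>x. indicator I x / c * x \<partial>distr M borel G)"
    unfolding distr_Y using c by (subst integral_density) auto
  also have "\<dots> = (\<integral>\<omega>. G \<omega> * indicator I (G \<omega>) / c \<partial>M)"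
    by (simp add: integral_distr mult.commute)
  finally show ?thesis
    by (simp add: c_def)
qed

lemma (in prob_space) AE_in_conditional_law:
  assumes [measurable]: "Y \<in> borel_measurable M" "G \<in> borel_measurable M" "I \<in> sets borel"
    and law: "\<And>A. A \<in> sets borel \<Longrightarrow> prob {\<omega>\<in>space M. Y \<omega> \<in> A}
      = prob {\<omega>\<in>space M. G \<omega> \<in> A \<inter> I} / prob {\<omega>\<in>space M. G \<omega> \<in> I}"
  shows "AE \<omega> in M. Y \<omega> \<in> I"
proof (rule AE_I')
  show "{\<omega>\<in>space M. Y \<omega> \<in> - I} \<in> null_sets M"
    using law[of "- I"] by (simp add: null_sets_def emeasure_eq_measure)
qed auto

lemma (in prob_space) prob_interval_eq_diff:
  fixes G :: "'a \<Rightarrow> real"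
  assumes [measurable]: "G \<in> borel_measurable M"
    and law: "\<And>u. u \<in> {0..1} \<Longrightarrow> prob {\<omega>\<in>space M. G \<omega> < u} = g u"
    and ab: "0 \<le> a" "a \<le> b" "b \<le> 1"
  shows "prob {\<omega>\<in>space M. G \<omega> \<in> {a..<b}} = g b - g a"
proof -
  have "{\<omega>\<in>space M. G \<omega> \<in> {a..<b}} = {\<omega>\<in>space M. G \<omega> < b} - {\<omega>\<in>space M. G \<omega> < a}"
    by auto
  also have "prob \<dots> = prob {\<omega>\<in>space M. G \<omega> < b} - prob {\<omega>\<in>space M. G \<omega> < a}"
    using ab by (intro finite_measure_Diff) auto
  finally show ?thesis
    using ab by (simp add: law)
qed

lemma strict_mono_on_partition_bounds:
  fixes \<alpha> :: "nat \<Rightarrow> real"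
  assumes "strict_mono_on {0..m+1} \<alpha>" "\<alpha> 0 = 0" "\<alpha> (m + 1) = 1" "j \<in> {1..m+1}"
  shows "0 \<le> \<alpha> (j - 1)" "\<alpha> (j - 1) \<le> \<alpha> j" "\<alpha> j \<le> 1"
  using strict_mono_on_leD[OF assms(1), of 0 "j - 1"] strict_mono_on_leD[OF assms(1), of "j - 1" j]
    strict_mono_on_leD[OF assms(1), of j "m+1"] assms(2-4) by auto

section \<open>Exceptions under a correct model\<close>

lemma measurable_hist[measurable]:
  assumes "t \<le> Suc n" and "\<And>i. i \<in> {1..n} \<Longrightarrow> X i \<in> borel_measurable P"
  shows "hist X t \<in> measurable P (PiM {1..<t} (\<lambda>_. borel))"
  unfolding hist_def using assms by (intro measurable_restrict) auto

lemma cond_cdf_eq_law: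
  assumes X: "\<And>i. i \<in> {1..n} \<Longrightarrow> X i \<in> borel_measurable P"
    and Y: "\<And>i. i \<in> {1..n} \<Longrightarrow> Y i \<in> borel_measurable P"
    and law: "distr P (PiM {1..n} (\<lambda>_. borel)) (\<lambda>\<omega>. \<lambda>i\<in>{1..n}. X i \<omega>)
            = distr P (PiM {1..n} (\<lambda>_. borel)) (\<lambda>\<omega>. \<lambda>i\<in>{1..n}. Y i \<omega>)"
    and t: "t \<in> {1..n}" and F: "cond_cdf P X t F"
  shows "cond_cdf P Y t F"
proof -
  let ?Pi = "PiM {1..n} (\<lambda>_::nat. borel :: real measure)"
  let ?H = "PiM {1..<t} (\<lambda>_::nat. borel :: real measure)"
  have vec: "(\<lambda>\<omega>. \<lambda>i\<in>{1..n}. Z i \<omega>) \<in> measurable P ?Pi"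
    if "\<And>i. i \<in> {1..n} \<Longrightarrow> Z i \<in> borel_measurable P" for Z :: "nat \<Rightarrow> 'a \<Rightarrow> real"
    using that by (intro measurable_restrict) auto
  have [measurable]: "(\<lambda>v. restrict v {1..<t}) \<in> measurable ?Pi ?H"
    using t by (intro measurable_restrict_subset) auto
  have [measurable]: "(\<lambda>v::nat \<Rightarrow> real. v t) \<in> borel_measurable ?Pi"
    using t by (intro measurable_component_singleton) auto
  have Q: "{v\<in>space ?Pi. v t \<le> x \<and> restrict v {1..<t} \<in> B} \<in> sets ?Pi"
    if [measurable]: "B \<in> sets ?H" for x B
    by measurable
  have hist_eq: "restrict (\<lambda>i\<in>{1..n}. Z i \<omega>) {1..<t} = hist Z t \<omega>" for Z :: "nat \<Rightarrow> 'a \<Rightarrow> real" and \<omega>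
    using t by (auto simp: hist_def restrict_def fun_eq_iff)
  have prob_eq: "measure P {\<omega>\<in>space P. Z t \<omega> \<le> x \<and> hist Z t \<omega> \<in> B}
      = measure (distr P ?Pi (\<lambda>\<omega>. \<lambda>i\<in>{1..n}. Z i \<omega>)) {v\<in>space ?Pi. v t \<le> x \<and> restrict v {1..<t} \<in> B}"
    if "\<And>i. i \<in> {1..n} \<Longrightarrow> Z i \<in> borel_measurable P" and [measurable]: "B \<in> sets ?H"
    for Z :: "nat \<Rightarrow> 'a \<Rightarrow> real" and x B
    using t measurable_space[OF vec[OF that(1)]]
    by (subst measure_distr[OF vec[OF that(1)] Q[OF that(2)]])
       (auto intro!: arg_cong[where f="measure P"] simp: hist_eq[symmetric])
  have integral_eq: "(\<integral>\<omega>. indicator B (hist Z t \<omega>) * F x (hist Z t \<omega>) \<partial>P)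
      = (\<integral>v. indicator B (restrict v {1..<t}) * F x (restrict v {1..<t})
          \<partial>distr P ?Pi (\<lambda>\<omega>. \<lambda>i\<in>{1..n}. Z i \<omega>))"
    if "\<And>i. i \<in> {1..n} \<Longrightarrow> Z i \<in> borel_measurable P" and [measurable]: "B \<in> sets ?H"
    for Z :: "nat \<Rightarrow> 'a \<Rightarrow> real" and x B
  proof -
    have [measurable]: "F x \<in> borel_measurable ?H" using F unfolding cond_cdf_def by blast
    have f: "(\<lambda>v. indicator B (restrict v {1..<t}) * F x (restrict v {1..<t})) \<in> borel_measurable ?Pi"
      by measurable
    show ?thesis
      unfolding hist_eq[symmetric] by (rule integral_distr[OF vec[OF that(1)] f, symmetric])
  qed
  have "\<forall>x. \<forall>B\<in>sets ?H. measure P {\<omega>\<in>space P. Y t \<omega> \<le> x \<and> hist Y t \<omega> \<in> B}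
      = (\<integral>\<omega>. indicator B (hist Y t \<omega>) * F x (hist Y t \<omega>) \<partial>P)"
  proof (intro allI ballI)
    fix x B assume B: "B \<in> sets ?H"
    have "measure P {\<omega>\<in>space P. Y t \<omega> \<le> x \<and> hist Y t \<omega> \<in> B}
        = measure P {\<omega>\<in>space P. X t \<omega> \<le> x \<and> hist X t \<omega> \<in> B}"
      using prob_eq[of X, OF X B] prob_eq[of Y, OF Y B] law by simp
    also have "\<dots> = (\<integral>\<omega>. indicator B (hist X t \<omega>) * F x (hist X t \<omega>) \<partial>P)"
      using F B unfolding cond_cdf_def by blast
    also have "\<dots> = (\<integral>\<omega>. indicator B (hist Y t \<omega>) * F x (hist Y t \<omega>) \<partial>P)"
      using integral_eq[of X, OF X B] integral_eq[of Y, OF Y B] law by simp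
    finally show "measure P {\<omega>\<in>space P. Y t \<omega> \<le> x \<and> hist Y t \<omega> \<in> B}
        = (\<integral>\<omega>. indicator B (hist Y t \<omega>) * F x (hist Y t \<omega>) \<partial>P)" .
  qed
  then show ?thesis
    using F unfolding cond_cdf_def by blast
qed

locale correct_model = prob_space P for P :: "'a measure" +
  fixes L M :: "nat \<Rightarrow> 'a \<Rightarrow> real" and F :: "nat \<Rightarrow> real \<Rightarrow> (nat \<Rightarrow> real) \<Rightarrow> real" and n :: nat
  assumes L_rv[measurable]: "\<And>t. t \<in> {1..n} \<Longrightarrow> L t \<in> borel_measurable P"
    and M_rv: "\<And>t. t \<in> {1..n} \<Longrightarrow> M t \<in> borel_measurable P"
    and F_cond: "\<And>t. t \<in> {1..n} \<Longrightarrow> cond_cdf P M t (F t)"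
    and F_cont: "\<And>t y. t \<in> {1..n} \<Longrightarrow> continuous_on UNIV (\<lambda>x. F t x y)"
    and same_law: "distr P (PiM {1..n} (\<lambda>_. borel)) (\<lambda>\<omega>. \<lambda>i\<in>{1..n}. M i \<omega>)
                 = distr P (PiM {1..n} (\<lambda>_. borel)) (\<lambda>\<omega>. \<lambda>i\<in>{1..n}. L i \<omega>)"
begin

abbreviation Hist :: "nat \<Rightarrow> (nat \<Rightarrow> real) measure" where
  "Hist t \<equiv> PiM {1..<t} (\<lambda>_. borel)"

lemma measurable_hist_L[measurable]: "t \<in> {1..n} \<Longrightarrow> hist L t \<in> measurable P (Hist t)"
  using measurable_hist[of t n L P] L_rv by auto

lemma real_cond_cdf_L:
  assumes t: "t \<in> {1..n}"
  shows "real_cond_cdf P (L t) (hist L t) (Hist t) (F t)"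
proof -
  have "cond_cdf P L t (F t)"
    by (rule cond_cdf_eq_law[OF M_rv L_rv same_law t F_cond[OF t]])
  then show ?thesis
    using F_cont[OF t] L_rv[OF t] measurable_hist_L[OF t] unfolding cond_cdf_def
    by (intro real_cond_cdf.intro[OF prob_space_axioms] real_cond_cdf_axioms.intro) blast+
qed

definition U :: "nat \<Rightarrow> 'a \<Rightarrow> real" where
  "U t \<omega> = F t (L t \<omega>) (hist L t \<omega>)"

lemma measurable_U[measurable]: "t \<in> {1..n} \<Longrightarrow> U t \<in> borel_measurable P"
  unfolding U_def by (rule real_cond_cdf.borel_measurable_F_comp[OF real_cond_cdf_L L_rv])

lemma prob_U_le_hist:
  "t \<in> {1..n} \<Longrightarrow> B \<in> sets (Hist t) \<Longrightarrow>
    prob {\<omega>\<in>space P. U t \<omega> \<le> c \<and> hist L t \<omega> \<in> B} = max 0 (min 1 c) * prob {\<omega>\<in>space P. hist L t \<omega> \<in> B}"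
  unfolding U_def by (rule real_cond_cdf.prob_F_le[OF real_cond_cdf_L])

lemma prob_U_le:
  assumes t: "t \<in> {1..n}"
  shows "prob {\<omega>\<in>space P. U t \<omega> \<le> c} = max 0 (min 1 c)"
proof -
  have "{\<omega>\<in>space P. hist L t \<omega> \<in> space (Hist t)} = space P"
    "{\<omega>\<in>space P. U t \<omega> \<le> c \<and> hist L t \<omega> \<in> space (Hist t)} = {\<omega>\<in>space P. U t \<omega> \<le> c}"
    using measurable_space[OF measurable_hist_L[OF t]] by auto
  then show ?thesis
    using prob_U_le_hist[OF t sets.top, of c] by (simp add: prob_space)
qed

lemma U_eq_hist: "s < k \<Longrightarrow> 1 \<le> s \<Longrightarrow> U s \<omega> = F s (hist L k \<omega> s) (restrict (hist L k \<omega>) {1..<s})"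
  by (auto simp: U_def hist_def restrict_def fun_eq_iff intro!: arg_cong2[where f="F s"])

text \<open>Induction removing the latest time k: the earlier U's are a function of the history
  before k, given which U k is uniform.\<close>
lemma prob_U_le_all:
  assumes "T \<subseteq> {1..n}"
  shows "prob {\<omega>\<in>space P. \<forall>t\<in>T. U t \<omega> \<le> c t} = (\<Prod>t\<in>T. max 0 (min 1 (c t)))"
proof -
  have "finite T" using assms by (rule finite_subset) simp
  then show ?thesis using assms
  proof (induction T rule: finite_linorder_max_induct)
    case empty
    then show ?case by (simp add: prob_space)
  next
    case (insert k T)
    then have k: "k \<in> {1..n}" and T: "T \<subseteq> {1..n}" by auto
    define B where "B = {y\<in>space (Hist k). \<forall>s\<in>T. F s (y s) (restrict y {1..<s}) \<le> c s}"
    have "B \<in> sets (Hist k)"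
      unfolding B_def
    proof (rule sets.sets_Collect_finite_All[OF _ \<open>finite T\<close>])
      fix s assume "s \<in> T"
      with insert T have s: "s \<in> {1..n}" "s < k" by auto
      have "(\<lambda>y. y s) \<in> borel_measurable (Hist k)"
        using s by (intro measurable_component_singleton) auto
      moreover have "(\<lambda>y. restrict y {1..<s}) \<in> measurable (Hist k) (Hist s)"
        using s by (intro measurable_restrict_subset) auto
      ultimately have "(\<lambda>y. F s (y s) (restrict y {1..<s})) \<in> borel_measurable (Hist k)"
        by (rule borel_measurable_caratheodory[OF real_cond_cdf.F_meas[OF real_cond_cdf_L] F_cont,
              OF s(1) s(1)])
      then show "{y\<in>space (Hist k). F s (y s) (restrict y {1..<s}) \<le> c s} \<in> sets (Hist k)"
        by measurable
    qed
    moreover have "hist L k \<omega> \<in> B \<longleftrightarrow> (\<forall>t\<in>T. U t \<omega> \<le> c t)" if "\<omega> \<in> space P" for \<omega>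
    proof -
      have "U s \<omega> = F s (hist L k \<omega> s) (restrict (hist L k \<omega>) {1..<s})" if "s \<in> T" for s
        using that insert T by (intro U_eq_hist) auto
      then have "(\<forall>s\<in>T. F s (hist L k \<omega> s) (restrict (hist L k \<omega>) {1..<s}) \<le> c s)
          \<longleftrightarrow> (\<forall>t\<in>T. U t \<omega> \<le> c t)"
        by (intro ball_cong) simp_all
      then show ?thesis
        using measurable_space[OF measurable_hist_L[OF k] that] by (simp add: B_def)
    qed
    ultimately have "prob {\<omega>\<in>space P. \<forall>t\<in>insert k T. U t \<omega> \<le> c t}
        = max 0 (min 1 (c k)) * prob {\<omega>\<in>space P. \<forall>t\<in>T. U t \<omega> \<le> c t}"
      using prob_U_le_hist[OF k, of B "c k"] by (simp cong: conj_cong)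
    moreover have "k \<notin> T" using insert by blast
    ultimately show ?case
      using insert.IH[OF T] \<open>finite T\<close> by simp
  qed
qed

lemma indep_U: "indep_vars (\<lambda>_. borel) U {1..n}"
proof (rule indep_vars_real_cdfI)
  show "random_variable borel (U t)" if "t \<in> {1..n}" for t
    using that by (rule measurable_U)
  fix J c assume J: "J \<subseteq> {1..n}" "finite J" "J \<noteq> {}"
  have "prob {\<omega>\<in>space P. \<forall>t\<in>J. U t \<omega> \<le> c t} = (\<Prod>t\<in>J. max 0 (min 1 (c t)))"
    using J(1) by (rule prob_U_le_all)
  also have "\<dots> = (\<Prod>t\<in>J. prob {\<omega>\<in>space P. U t \<omega> \<le> c t})"
    by (intro prod.cong refl prob_U_le[symmetric]) (use J in blast)
  finally show "prob {\<omega>\<in>space P. \<forall>t\<in>J. U t \<omega> \<le> c t} = (\<Prod>t\<in>J. prob {\<omega>\<in>space P. U t \<omega> \<le> c t})" .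
qed

abbreviation LM :: "'a \<Rightarrow> nat \<Rightarrow> real \<times> real" where
  "LM \<equiv> \<lambda>\<omega>. \<lambda>i\<in>{1..n}. (L i \<omega>, M i \<omega>)"

lemma measurable_LM: "LM \<in> measurable P (PiM {1..n} (\<lambda>_. borel \<Otimes>\<^sub>M borel))"
  using L_rv M_rv by (intro measurable_restrict measurable_Pair) auto

lemma sets_vimage_U_subset:
  assumes t: "t \<in> {1..n}"
  shows "sets (vimage_algebra (space P) (U t) borel)
    \<subseteq> sets (vimage_algebra (space P) LM (PiM {1..n} (\<lambda>_. borel \<Otimes>\<^sub>M borel)))"
proof (rule sets_image_in_sets)
  let ?Pi = "PiM {1..n} (\<lambda>_::nat. borel \<Otimes>\<^sub>M borel :: (real \<times> real) measure)"
  have "(\<lambda>v. fst (v t)) \<in> borel_measurable ?Pi"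
    using t by measurable
  moreover have "(\<lambda>v. \<lambda>i\<in>{1..<t}. fst (v i)) \<in> measurable ?Pi (Hist t)"
    using t by (intro measurable_restrict) measurable
  ultimately have "(\<lambda>v. F t (fst (v t)) (\<lambda>i\<in>{1..<t}. fst (v i))) \<in> borel_measurable ?Pi"
    by (rule borel_measurable_caratheodory
        [OF real_cond_cdf.F_meas[OF real_cond_cdf_L[OF t]] F_cont[OF t]])
  moreover have "LM \<in> space P \<rightarrow> space ?Pi"
    by (intro Pi_I measurable_space[OF measurable_LM])
  ultimately have "(\<lambda>\<omega>. F t (fst (LM \<omega> t)) (\<lambda>i\<in>{1..<t}. fst (LM \<omega> i)))
      \<in> borel_measurable (vimage_algebra (space P) LM ?Pi)"
    by (intro measurable_compose[OF measurable_vimage_algebra1])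
  moreover have "F t (fst (LM \<omega> t)) (\<lambda>i\<in>{1..<t}. fst (LM \<omega> i)) = U t \<omega>" for \<omega>
    using t by (auto simp: U_def hist_def intro!: arg_cong[where f="F t _"])
  ultimately show "U t \<in> borel_measurable (vimage_algebra (space P) LM ?Pi)"
    by simp
qed simp

end

locale randomized_exceptions = correct_model +
  fixes Gr :: "nat \<Rightarrow> nat \<Rightarrow> 'a \<Rightarrow> real" and m :: nat
  assumes Gr_rv[measurable]: "\<And>t j. t \<in> {1..n} \<Longrightarrow> j \<in> {1..m+1} \<Longrightarrow> Gr t j \<in> borel_measurable P"
    and Gr_indep: "indep_sets
        (\<lambda>k. case k of
               None \<Rightarrow> sets (vimage_algebra (space P) (\<lambda>\<omega>. \<lambda>i\<in>{1..n}. (L i \<omega>, M i \<omega>))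
                                (PiM {1..n} (\<lambda>_. borel \<Otimes>\<^sub>M borel)))
             | Some (t, j) \<Rightarrow> sets (vimage_algebra (space P) (Gr t j) borel))
        (insert None (Some ` ({1..n} \<times> {1..m+1})))"
begin

lemma indep_U_Gr:
  "indep_vars (\<lambda>_. borel) (case_sum U (\<lambda>(t, j). Gr t j)) (Inl ` {1..n} \<union> Inr ` ({1..n} \<times> {1..m+1}))"
proof -
  have "indep_sets (\<lambda>t. sets (vimage_algebra (space P) (U t) borel)) {1..n}"
    using indep_U by (simp add: indep_vars_def sets_vimage_algebra)
  from indep_sets_refine_option[OF Gr_indep _ this sets_vimage_U_subset]
  have "indep_sets (case_sum (\<lambda>t. sets (vimage_algebra (space P) (U t) borel))
      (\<lambda>(t, j). sets (vimage_algebra (space P) (Gr t j) borel))) (Inl ` {1..n} \<union> Inr ` ({1..n} \<times> {1..m+1}))"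
    by simp
  moreover have "sigma_sets (space P) {case_sum U (\<lambda>(t, j). Gr t j) i -` A \<inter> space P |A. A \<in> sets borel}
      = case_sum (\<lambda>t. sets (vimage_algebra (space P) (U t) borel))
          (\<lambda>(t, j). sets (vimage_algebra (space P) (Gr t j) borel)) i" for i
    by (cases i) (auto simp: sets_vimage_algebra)
  moreover have "random_variable borel (case_sum U (\<lambda>(t, j). Gr t j) i)"
    if "i \<in> Inl ` {1..n} \<union> Inr ` ({1..n} \<times> {1..m+1})" for i
    using that by (auto intro: measurable_U)
  ultimately show ?thesis
    unfolding indep_vars_def by simp
qed

lemma indep_var_U_Gr:
  assumes "t \<in> {1..n}" "j \<in> {1..m+1}"
  shows "indep_var borel (U t) borel (Gr t j)"
proof -
  let ?X = "case_sum U (\<lambda>(t, j). Gr t j)"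
  have "indep_var borel ((\<lambda>f. f (Inl t)) \<circ> (\<lambda>\<omega>. restrict (\<lambda>i. ?X i \<omega>) {Inl t}))
      borel ((\<lambda>f. f (Inr (t, j))) \<circ> (\<lambda>\<omega>. restrict (\<lambda>i. ?X i \<omega>) {Inr (t, j)}))"
    using assms
    by (intro indep_var_compose[OF indep_var_restrict[OF indep_U_Gr]] measurable_component_singleton)
       auto
  then show ?thesis
    by (simp add: comp_def)
qed

lemma AE_U_neq: "t \<in> {1..n} \<Longrightarrow> j \<in> {1..m+1} \<Longrightarrow> AE \<omega> in P. U t \<omega> \<noteq> 1 - Gr t j \<omega>"
  using AE_indep_uniform_neq[OF indep_var_U_Gr prob_U_le, of t j "\<lambda>v. 1 - v"] by simp

lemma exc_ind_eq_exceedance: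
  assumes t: "t \<in> {1..n}" and "U t \<omega> \<noteq> 1 - Gr t j \<omega>"
  shows "exc_ind F L Gr t j \<omega> = (if 1 - Gr t j \<omega> < U t \<omega> then 1 else 0)"
proof (cases "1 - Gr t j \<omega> < U t \<omega>")
  case True
  have "isCont (\<lambda>x. F t x (hist L t \<omega>)) (L t \<omega>)"
    using F_cont[OF t] continuous_on_eq_continuous_at[OF open_UNIV] by blast
  then have "cquantile (\<lambda>x. F t x (hist L t \<omega>)) (1 - Gr t j \<omega>) < ereal (L t \<omega>)"
    using True by (intro cquantile_less_of_less) (simp_all add: U_def)
  then show ?thesis using True by (simp add: exc_ind_def)
next
  case False
  with assms(2) have "F t (L t \<omega>) (hist L t \<omega>) < 1 - Gr t j \<omega>" by (simp add: U_def)
  then have "ereal (L t \<omega>) \<le> cquantile (\<lambda>x. F t x (hist L t \<omega>)) (1 - Gr t j \<omega>)"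
    by (intro ereal_le_cquantile_of_less real_cond_cdf.F_mono[OF real_cond_cdf_L[OF t]])
  then show ?thesis using False by (simp add: exc_ind_def not_less)
qed

text \<open>By cquantile_less_iff_rat the exception event is a countable union over rational
  thresholds.\<close>
lemma measurable_exc_ind[measurable]:
  assumes t: "t \<in> {1..n}" and j: "j \<in> {1..m+1}"
  shows "exc_ind F L Gr t j \<in> borel_measurable P"
proof -
  define S where "S = {\<omega>\<in>space P. \<exists>r\<in>\<rat>. r < L t \<omega> \<and> 1 - Gr t j \<omega> \<le> F t r (hist L t \<omega>)}"
  have "S \<in> sets P" unfolding S_def
  proof (rule sets.sets_Collect_countable_Ex'[OF _ countable_rat])
    fix r :: real
    have "(\<lambda>\<omega>. F t r (hist L t \<omega>)) \<in> borel_measurable P"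
      using measurable_compose
        [OF measurable_hist_L[OF t] real_cond_cdf.F_meas[OF real_cond_cdf_L[OF t]]] .
    then show "{\<omega>\<in>space P. r < L t \<omega> \<and> 1 - Gr t j \<omega> \<le> F t r (hist L t \<omega>)} \<in> sets P"
      using t j by measurable
  qed
  moreover have "exc_ind F L Gr t j \<omega> = indicator S \<omega>" if "\<omega> \<in> space P" for \<omega>
    using that cquantile_less_iff_rat[OF real_cond_cdf.F_mono[OF real_cond_cdf_L[OF t]]]
    by (simp add: exc_ind_def S_def indicator_def)
  ultimately show ?thesis
    by (subst measurable_cong) auto
qed

lemma indep_exceedance_indicators:
  "indep_vars (\<lambda>_. PiM {1..m+1} (\<lambda>_. borel))
     (\<lambda>t \<omega>. \<lambda>j\<in>{1..m+1}. if 1 - Gr t j \<omega> < U t \<omega> then 1 else 0 :: real) {1..n}"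
proof -
  let ?X = "case_sum U (\<lambda>(t, j). Gr t j)"
  define K where "K t = insert (Inl t) (Inr ` ({t} \<times> {1..m+1}))" for t :: nat
  define \<phi> where "\<phi> t v = (\<lambda>j\<in>{1..m+1}. if 1 - v (Inr (t, j)) < v (Inl t) then 1 else 0 :: real)"
    for t and v :: "nat + nat \<times> nat \<Rightarrow> real"
  have "indep_vars (\<lambda>t. PiM (K t) (\<lambda>_. borel)) (\<lambda>t \<omega>. restrict (\<lambda>i. ?X i \<omega>) (K t)) {1..n}"
    by (rule indep_vars_restrict[OF indep_U_Gr]) (auto simp: K_def disjoint_family_on_def)
  moreover have "\<phi> t \<in> measurable (PiM (K t) (\<lambda>_. borel)) (PiM {1..m+1} (\<lambda>_. borel))" for t
  proof -
    have [measurable]: "(\<lambda>v. v i) \<in> borel_measurable (PiM (K t) (\<lambda>_. borel))" if "i \<in> K t" for i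
      using that by (rule measurable_component_singleton)
    show ?thesis
      unfolding \<phi>_def by (intro measurable_restrict) (simp add: K_def)
  qed
  ultimately have "indep_vars (\<lambda>_. PiM {1..m+1} (\<lambda>_. borel))
      (\<lambda>t \<omega>. \<phi> t (restrict (\<lambda>i. ?X i \<omega>) (K t))) {1..n}"
    by (rule indep_vars_compose2)
  moreover have "\<phi> t (restrict (\<lambda>i. ?X i \<omega>) (K t))
      = (\<lambda>j\<in>{1..m+1}. if 1 - Gr t j \<omega> < U t \<omega> then 1 else 0)" for t \<omega>
    by (auto simp: \<phi>_def K_def)
  ultimately show ?thesis by simp
qed

lemma indep_exc_ind:
  assumes "n \<ge> 1"
  shows "indep_vars (\<lambda>_. PiM {1..m+1} (\<lambda>_. borel)) (\<lambda>t \<omega>. \<lambda>j\<in>{1..m+1}. exc_ind F L Gr t j \<omega>) {1..n}"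
proof (rule indep_vars_AE_cong[OF indep_exceedance_indicators])
  show "{1..n} \<noteq> {}" using assms by simp
  show "random_variable (PiM {1..m+1} (\<lambda>_. borel)) (\<lambda>\<omega>. \<lambda>j\<in>{1..m+1}. exc_ind F L Gr t j \<omega>)"
    if "t \<in> {1..n}" for t
    using that by (intro measurable_restrict measurable_exc_ind) auto
  have "AE \<omega> in P. \<forall>t\<in>{1..n}. \<forall>j\<in>{1..m+1}. U t \<omega> \<noteq> 1 - Gr t j \<omega>"
    by (simp add: AE_finite_all AE_U_neq)
  then show "AE \<omega> in P. \<forall>t\<in>{1..n}. (\<lambda>j\<in>{1..m+1}. if 1 - Gr t j \<omega> < U t \<omega> then 1 else 0)
      = (\<lambda>j\<in>{1..m+1}. exc_ind F L Gr t j \<omega>)"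
    by eventually_elim (auto simp: exc_ind_eq_exceedance intro!: restrict_ext)
qed

lemma integral_exc_ind:
  assumes t: "t \<in> {1..n}" and j: "j \<in> {1..m+1}" and Gr01: "AE \<omega> in P. Gr t j \<omega> \<in> {0..1}"
  shows "(\<integral>\<omega>. exc_ind F L Gr t j \<omega> \<partial>P) = expectation (Gr t j)"
proof -
  have [measurable]: "U t \<in> borel_measurable P" "Gr t j \<in> borel_measurable P"
    using t j by measurable
  have "(\<integral>\<omega>. exc_ind F L Gr t j \<omega> \<partial>P) = (\<integral>\<omega>. indicator {\<omega>\<in>space P. 1 - Gr t j \<omega> < U t \<omega>} \<omega> \<partial>P)"
  proof (rule integral_cong_AE)
    show "AE \<omega> in P. exc_ind F L Gr t j \<omega> = indicator {\<omega>\<in>space P. 1 - Gr t j \<omega> < U t \<omega>} \<omega>"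
      using AE_U_neq[OF t j] AE_space
      by eventually_elim (simp add: exc_ind_eq_exceedance[OF t] indicator_def)
  qed (use t j in measurable)
  also have "\<dots> = prob {\<omega>\<in>space P. 1 - Gr t j \<omega> < U t \<omega>}"
    by (simp add: Int_absorb2)
  also have "\<dots> = expectation (Gr t j)"
    by (rule prob_indep_uniform_greater[OF indep_var_U_Gr[OF t j] prob_U_le[OF t] Gr01])
  finally show ?thesis .
qed

end

theorem lemma3p1:
  fixes P :: "'a measure"
    and L M :: "nat \<Rightarrow> 'a \<Rightarrow> real"
    and F :: "nat \<Rightarrow> real \<Rightarrow> (nat \<Rightarrow> real) \<Rightarrow> real"
    and g :: "real \<Rightarrow> real"
    and G :: "'a \<Rightarrow> real"
    and Gr :: "nat \<Rightarrow> nat \<Rightarrow> 'a \<Rightarrow> real"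
    and \<alpha> :: "nat \<Rightarrow> real"
    and n m :: nat
  assumes P: "prob_space P"
    and n: "n \<ge> 1"
    and L_rv: "\<And>t. t \<in> {1..n} \<Longrightarrow> L t \<in> borel_measurable P"
    and M_rv: "\<And>t. t \<in> {1..n} \<Longrightarrow> M t \<in> borel_measurable P"
    and F_cond: "\<And>t. t \<in> {1..n} \<Longrightarrow> cond_cdf P M t (F t)"
    and F_cont: "\<And>t y. t \<in> {1..n} \<Longrightarrow> continuous_on UNIV (\<lambda>x. F t x y)"
    and g: "left_cont_distortion g"
    and G_rv: "G \<in> borel_measurable P"
    and G_range: "\<And>\<omega>. \<omega> \<in> space P \<Longrightarrow> G \<omega> \<in> {0..1}"
    and G_law: "\<And>u. u \<in> {0..1} \<Longrightarrow> measure P {\<omega>\<in>space P. G \<omega> < u} = g u"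
    and G_indep: "prob_space.indep_set P (sets (vimage_algebra (space P) G borel))
        (sets (vimage_algebra (space P) (\<lambda>\<omega>. \<lambda>i\<in>{1..n}. (L i \<omega>, M i \<omega>))
                                (PiM {1..n} (\<lambda>_. borel \<Otimes>\<^sub>M borel))))"
    and \<alpha>0: "\<alpha> 0 = 0" and \<alpha>1: "\<alpha> (m + 1) = 1"
    and \<alpha>_mono: "strict_mono_on {0..m+1} \<alpha>"
    and g_jump: "\<And>j. j \<in> {1..m+1} \<Longrightarrow> g (\<alpha> j) - g (\<alpha> (j - 1)) \<noteq> 0"
    and Gr_rv: "\<And>t j. t \<in> {1..n} \<Longrightarrow> j \<in> {1..m+1} \<Longrightarrow> Gr t j \<in> borel_measurable P"
    and Gr_law: "\<And>t j A. t \<in> {1..n} \<Longrightarrow> j \<in> {1..m+1} \<Longrightarrow> A \<in> sets borel \<Longrightarrow>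
        measure P {\<omega>\<in>space P. Gr t j \<omega> \<in> A}
        = measure P {\<omega>\<in>space P. G \<omega> \<in> A \<inter> {\<alpha> (j - 1)..<\<alpha> j}}
          / measure P {\<omega>\<in>space P. G \<omega> \<in> {\<alpha> (j - 1)..<\<alpha> j}}"
    and Gr_indep: "prob_space.indep_sets P
        (\<lambda>k. case k of
               None \<Rightarrow> sets (vimage_algebra (space P) (\<lambda>\<omega>. \<lambda>i\<in>{1..n}. (L i \<omega>, M i \<omega>))
                                (PiM {1..n} (\<lambda>_. borel \<Otimes>\<^sub>M borel)))
             | Some (t, j) \<Rightarrow> sets (vimage_algebra (space P) (Gr t j) borel))
        (insert None (Some ` ({1..n} \<times> {1..m+1})))"
    and same_law: "distr P (PiM {1..n} (\<lambda>_. borel)) (\<lambda>\<omega>. \<lambda>i\<in>{1..n}. M i \<omega>)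
                 = distr P (PiM {1..n} (\<lambda>_. borel)) (\<lambda>\<omega>. \<lambda>i\<in>{1..n}. L i \<omega>)"
  shows "(\<forall>t\<in>{1..n}. \<forall>j\<in>{1..m+1}.
            (\<integral>\<omega>. exc_ind F L Gr t j \<omega> \<partial>P)
            = (\<integral>\<omega>. G \<omega> * indicator {\<alpha> (j - 1)..<\<alpha> j} (G \<omega>) \<partial>P) / (g (\<alpha> j) - g (\<alpha> (j - 1))))
         \<and> prob_space.indep_vars P (\<lambda>_. PiM {1..m+1} (\<lambda>_. borel))
             (\<lambda>t \<omega>. \<lambda>j\<in>{1..m+1}. exc_ind F L Gr t j \<omega>) {1..n}"
proof -
  interpret randomized_exceptions P L M F n Gr m
    using P L_rv M_rv F_cond F_cont same_law Gr_rv Gr_indep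
    by (intro randomized_exceptions.intro correct_model.intro randomized_exceptions_axioms.intro
        correct_model_axioms.intro) auto
  have "(\<integral>\<omega>. exc_ind F L Gr t j \<omega> \<partial>P)
      = (\<integral>\<omega>. G \<omega> * indicator {\<alpha> (j - 1)..<\<alpha> j} (G \<omega>) \<partial>P) / (g (\<alpha> j) - g (\<alpha> (j - 1)))"
    if t: "t \<in> {1..n}" and j: "j \<in> {1..m+1}" for t j
  proof -
    note bounds = strict_mono_on_partition_bounds[OF \<alpha>_mono \<alpha>0 \<alpha>1 j]
    have "AE \<omega> in P. Gr t j \<omega> \<in> {\<alpha> (j - 1)..<\<alpha> j}"
      using Gr_rv[OF t j] G_rv Gr_law[OF t j] by (intro AE_in_conditional_law) auto
    then have "AE \<omega> in P. Gr t j \<omega> \<in> {0..1}"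
      by eventually_elim (use bounds in auto)
    then have "(\<integral>\<omega>. exc_ind F L Gr t j \<omega> \<partial>P) = expectation (Gr t j)"
      by (rule integral_exc_ind[OF t j])
    also have "\<dots> = expectation (\<lambda>\<omega>. G \<omega> * indicator {\<alpha> (j - 1)..<\<alpha> j} (G \<omega>))
        / prob {\<omega>\<in>space P. G \<omega> \<in> {\<alpha> (j - 1)..<\<alpha> j}}"
      using Gr_rv[OF t j] G_rv Gr_law[OF t j] by (intro expectation_conditional_law) auto
    also have "prob {\<omega>\<in>space P. G \<omega> \<in> {\<alpha> (j - 1)..<\<alpha> j}} = g (\<alpha> j) - g (\<alpha> (j - 1))"
      using G_rv G_law bounds by (rule prob_interval_eq_diff)
    finally show ?thesis .
  qed
  then show ?thesis
    using indep_exc_ind[OF n] by blast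
qed

end
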